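(* The $\mathcal{C}$-module $\mathfrak{n}$ is an ideal of $\widehat{\mathfrak{H}^{0}}$ with respect to both the harmonic product $\ast_\hbar$ and the shuffle product $\mathrm{sh}_\hbar$; that is, $\mathfrak n\ast_\hbar\widehat{\mathfrak H^0}\subset\mathfrak n$ and $\mathfrak n\,\mathrm{sh}_\hbar\,\widehat{\mathfrak H^0}\subset\mathfrak n$.
   Context: Let $\mathcal{C}=\mathbb{Q}[\hbar]$ ($\hbar$ formal), $\mathfrak{H}=\mathcal{C}\langle a,b\rangle$ the non-commutative polynomial ring. For $k\ge1$, $g_k=ba^k$. $A=\{\hbar b\}\cup\{ba^k\mid k\ge1\}$, $\mathcal{C}\langle A\rangle$ the $\mathcal{C}$-subalgebra generated by $1$ and $A$, $\mathfrak z$ the $\mathcal C$-span of $A$, $\widehat{\mathfrak H^0}=\mathcal C+\sum_{k\ge1}\mathcal C\langle A\rangle g_k$. Let $\mathfrak n_0$ be the $\mathcal C$-span of $(\hbar b)^{\alpha_1}g_{\beta_1+1}\cdots(\hbar b)^{\alpha_r}g_{\beta_r+1}$ with $r\ge1$, $\alpha_i,\beta_i\ge0$ and $\alpha_s\ge1,\beta_t\ge1$ for some $1\le s\le t\le r$; $\mathfrak n=\mathfrak n_0+\hbar\widehat{\mathfrak H^0}$. Harmonic product: $\circ_\hbar$ symmetric $\mathcal C$-bilinear on $\mathfrak z$ with $(\hbar b)\circ_\hbar(\hbar b)=\hbar\cdot\hbar b$, $(\hbar b)\circ_\hbar g_k=\hbar g_k$, $g_k\circ_\hbar g_l=g_{k+l}$;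 $\ast_\hbar$ on $\mathcal{C}\langle A\rangle$ is $\mathcal C$-bilinear with $w\ast_\hbar1=1\ast_\hbar w=w$, $(wu)\ast_\hbar(w'v)=(w\ast_\hbar w'v)u+(wu\ast_\hbar w')v+(w\ast_\hbar w')(u\circ_\hbar v)$ ($u,v\in A$). Shuffle product $\mathrm{sh}_\hbar$ on $\mathfrak H$: $\mathcal C$-bilinear with $w\,\mathrm{sh}_\hbar\,1=1\,\mathrm{sh}_\hbar\,w=w$, $wa\,\mathrm{sh}_\hbar\,w'a=(wa\,\mathrm{sh}_\hbar\,w'+w\,\mathrm{sh}_\hbar\,w'a+\hbar(w\,\mathrm{sh}_\hbar\,w'))a$, $wb\,\mathrm{sh}_\hbar\,w'=w\,\mathrm{sh}_\hbar\,w'b=(w\,\mathrm{sh}_\hbar\,w')b$. *)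

theory Defs
  imports "HOL-Computational_Algebra.Polynomial"
begin

type_synonym C = "rat poly"

definition hbar :: C where "hbar = [:0, 1:]"

text \<open>Letters a, b; words; elements of the non-commutative polynomial ring
  C<a,b> are finitely supported maps word => C (finiteness holds for all
  elements actually considered: they are finite C-linear combinations).\<close>
datatype ab = La | Lb
type_synonym word = "ab list"
type_synonym 'w lin = "'w \<Rightarrow> C"
type_synonym H = "word lin"

definition supp :: "'w lin \<Rightarrow> 'w set" where
  "supp f = {w. f w \<noteq> 0}"

definition delta :: "'w \<Rightarrow> 'w lin" where
  "delta w = (\<lambda>v. if v = w then 1 else 0)"

definition smul :: "C \<Rightarrow> 'w lin \<Rightarrow> 'w lin" where
  "smul c f = (\<lambda>w. c * f w)"

inductive_set cspan :: "'w lin set \<Rightarrow> 'w lin set" for S where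
  zero: "(\<lambda>_. 0) \<in> cspan S"
| step: "s \<in> S \<Longrightarrow> x \<in> cspan S \<Longrightarrow> (\<lambda>w. c * s w + x w) \<in> cspan S"

text \<open>Appending a letter on the right of every word of a linear combination.
  We work with reversed words, so this is prepending in the reversed word.\<close>
definition rcons :: "'l \<Rightarrow> 'l list lin \<Rightarrow> 'l list lin" where
  "rcons x f = (\<lambda>w. case w of [] \<Rightarrow> 0 | y # w' \<Rightarrow> if y = x then f w' else 0)"

text \<open>On reversed words: the head of the list is the last letter.\<close>
fun sh_rev :: "word \<Rightarrow> word \<Rightarrow> H" where
  "sh_rev [] v = delta v"
| "sh_rev (x # u) [] = delta (x # u)"
| "sh_rev (Lb # u) v = rcons Lb (sh_rev u v)"
| "sh_rev (La # u) (Lb # v) = rcons Lb (sh_rev (La # u) v)"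
| "sh_rev (La # u) (La # v) =
     rcons La (\<lambda>w. sh_rev (La # u) v w + sh_rev u (La # v) w + hbar * sh_rev u v w)"

definition sh_word :: "word \<Rightarrow> word \<Rightarrow> H" where
  "sh_word u v = (\<lambda>w. sh_rev (rev u) (rev v) (rev w))"

definition shuffle :: "H \<Rightarrow> H \<Rightarrow> H" where
  "shuffle x y = (\<lambda>w. \<Sum>u\<in>supp x. \<Sum>v\<in>supp y. x u * y v * sh_word u v w)"

text \<open>Letter k :: nat of the alphabet A stands for hbar*b if k = 0 and for
  g_k = b a^k if k >= 1.  C<A> is free on A (the map below is injective),
  so the harmonic product is defined on A-words and transported.\<close>

definition circ_coeff :: "nat \<Rightarrow> nat \<Rightarrow> C" where
  "circ_coeff k l = (if k = 0 \<or> l = 0 then hbar else 1)"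
  \<comment> \<open>z_k o z_l = circ_coeff k l * z_(k+l): (hb)o(hb)=hbar hb, (hb)o g_k = hbar g_k, g_k o g_l = g_(k+l)\<close>

fun har_rev :: "nat list \<Rightarrow> nat list \<Rightarrow> nat list lin" where
  "har_rev [] v = delta v"
| "har_rev (x # u) [] = delta (x # u)"
| "har_rev (x # u) (y # v) =
     (\<lambda>w. rcons x (har_rev u (y # v)) w + rcons y (har_rev (x # u) v) w
          + circ_coeff x y * rcons (x + y) (har_rev u v) w)"

definition har_word :: "nat list \<Rightarrow> nat list \<Rightarrow> nat list lin" where
  "har_word u v = (\<lambda>w. har_rev (rev u) (rev v) (rev w))"

definition harm :: "nat list lin \<Rightarrow> nat list lin \<Rightarrow> nat list lin" where
  "harm X Y = (\<lambda>w. \<Sum>u\<in>supp X. \<Sum>v\<in>supp Y. X u * Y v * har_word u v w)"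

definition flat :: "nat list \<Rightarrow> word" where
  "flat W = concat (map (\<lambda>k. Lb # replicate k La) W)"

definition aw :: "nat list \<Rightarrow> H" where
  "aw W = smul (hbar ^ length (filter (\<lambda>k. k = 0) W)) (delta (flat W))"

definition iota :: "nat list lin \<Rightarrow> H" where
  "iota X = (\<lambda>w. \<Sum>U\<in>supp X. X U * aw U w)"

text \<open>H0hat = C + sum_k C<A> g_k: span of the empty word and of all A-words
  ending in some g_k, k >= 1.\<close>
definition H0hat :: "H set" where
  "H0hat = cspan (aw ` {W. W = [] \<or> (W \<noteq> [] \<and> last W \<ge> 1)})"

definition n0_word :: "nat list \<Rightarrow> bool" where
  "n0_word W \<longleftrightarrow> (\<exists>ps :: (nat \<times> nat) list. ps \<noteq> [] \<and>
      W = concat (map (\<lambda>(al, be). replicate al 0 @ [be + 1]) ps) \<and>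
      (\<exists>s t. s \<le> t \<and> t < length ps \<and> fst (ps ! s) \<ge> 1 \<and> snd (ps ! t) \<ge> 1))"

definition n0 :: "H set" where
  "n0 = cspan (aw ` {W. n0_word W})"

definition nset :: "H set" where
  "nset = {(\<lambda>w. x w + hbar * y w) | x y. x \<in> n0 \<and> y \<in> H0hat}"

end

(*
  Both modules are spanned by scaled words: H0hat by the vectors hbar^z(w) w and n by the vectors
  hbar^(z(w) + d(w)) w, where w is empty or begins with b and ends with a, z(w) is the number of
  factors bb of w (one for each letter hbar b of the corresponding A-word), and d(w) is 0 if w has
  a factor bb before a factor aa (a letter hbar b before a letter g_k with k >= 2) and 1 otherwise.
  Both inclusions thus become divisibility statements for the coefficients of the product of two
  words, proved by induction along the recursive definition of the product. In a shuffle, new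
  factors bb and lost patterns only arise when two letters a are contracted, which costs a factor
  hbar; in a quasi-shuffle, a pattern of the left factor survives unless its letter hbar b is
  contracted, which again costs hbar.
*)

theory Submission
  imports Defs
begin

section \<open>Spans of scaled basis vectors\<close>

lemma hbar_nonzero [simp]: "hbar \<noteq> 0"
  by (simp add: hbar_def)

lemma power_dvd_power_mult_mono:
  fixes h x :: "'a::comm_semiring_1"
  assumes "h ^ a dvd h ^ b * x" and "a' \<le> a" and "b \<le> b'"
  shows "h ^ a' dvd h ^ b' * x"
proof -
  have "h ^ a' dvd h ^ a" and "h ^ b * x dvd h ^ b' * x"
    using assms(2,3) by (simp_all add: le_imp_power_dvd mult_dvd_mono)
  then show ?thesis using assms(1) by (meson dvd_trans)
qed

lemma power_dvd_power_mult_shift: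
  fixes h x :: "'a::comm_semiring_1"
  assumes "h ^ a dvd h ^ b * x"
  shows "h ^ (a + k) dvd h ^ (b + k) * x"
  using mult_dvd_mono[OF assms dvd_refl[of "h ^ k"]] by (simp add: power_add mult_ac)

definition hbar_span :: "'w set \<Rightarrow> ('w \<Rightarrow> nat) \<Rightarrow> 'w lin set" where
  "hbar_span S e = {f. finite (supp f) \<and> supp f \<subseteq> S \<and> (\<forall>w. hbar ^ e w dvd f w)}"

lemma hbar_spanI:
  "finite (supp f) \<Longrightarrow> (\<And>w. f w \<noteq> 0 \<Longrightarrow> w \<in> S) \<Longrightarrow> (\<And>w. hbar ^ e w dvd f w)
    \<Longrightarrow> f \<in> hbar_span S e"
  by (auto simp: hbar_span_def supp_def)

lemma hbar_spanD:
  assumes "f \<in> hbar_span S e"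
  shows "finite (supp f)" and "f w \<noteq> 0 \<Longrightarrow> w \<in> S" and "hbar ^ e w dvd f w"
  using assms by (auto simp: hbar_span_def supp_def)

lemma hbar_span_cong:
  assumes "\<And>w. w \<in> S \<Longrightarrow> e w = e' w"
  shows "hbar_span S e = hbar_span S e'"
proof -
  have "hbar ^ e w dvd f w \<longleftrightarrow> hbar ^ e' w dvd f w" if "f w \<noteq> 0 \<longrightarrow> w \<in> S" for f w
    using that assms by (cases "f w = 0") auto
  then show ?thesis
    unfolding hbar_span_def supp_def by blast
qed

lemma hbar_span_add:
  assumes "f \<in> hbar_span S e" and "g \<in> hbar_span S e"
  shows "(\<lambda>w. f w + g w) \<in> hbar_span S e"
proof (rule hbar_spanI)
  have "supp (\<lambda>w. f w + g w) \<subseteq> supp f \<union> supp g"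
    by (auto simp: supp_def)
  then show "finite (supp (\<lambda>w. f w + g w))"
    using assms by (meson finite_Un finite_subset hbar_spanD(1))
  show "w \<in> S" if "f w + g w \<noteq> 0" for w
    using that hbar_spanD(2)[OF assms(1), of w] hbar_spanD(2)[OF assms(2), of w]
    by (cases "f w = 0") auto
  show "hbar ^ e w dvd f w + g w" for w
    using assms by (intro dvd_add hbar_spanD(3))
qed

lemma hbar_span_sum:
  assumes "finite I" and "\<And>i. i \<in> I \<Longrightarrow> g i \<in> hbar_span S e"
  shows "(\<lambda>w. \<Sum>i\<in>I. g i w) \<in> hbar_span S e"
  using assms
proof (induction I rule: finite_induct)
  case empty
  show ?case by (rule hbar_spanI) (simp_all add: supp_def)
next
  case (insert i I)
  then show ?case by (simp add: hbar_span_add)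
qed

lemma bilinear_mem_hbar_span:
  assumes "finite (supp x)" and "finite (supp y)"
    and "\<And>u v. x u \<noteq> 0 \<Longrightarrow> y v \<noteq> 0 \<Longrightarrow> (\<lambda>w. x u * y v * p u v w) \<in> hbar_span S e"
  shows "(\<lambda>w. \<Sum>u\<in>supp x. \<Sum>v\<in>supp y. x u * y v * p u v w) \<in> hbar_span S e"
  using assms by (intro hbar_span_sum) (auto simp: supp_def)

lemma cspan_monomials_subset_hbar_span:
  "cspan ((\<lambda>w. smul (hbar ^ e w) (delta w)) ` S) \<subseteq> hbar_span S e"
proof
  fix f assume "f \<in> cspan ((\<lambda>w. smul (hbar ^ e w) (delta w)) ` S)"
  then show "f \<in> hbar_span S e"
  proof (induction rule: cspan.induct)
    case zero
    show ?case by (rule hbar_spanI) (simp_all add: supp_def)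
  next
    case (step s x c)
    then obtain w0 where "w0 \<in> S" "s = smul (hbar ^ e w0) (delta w0)"
      by blast
    then have "(\<lambda>w. c * s w) \<in> hbar_span S e"
      by (intro hbar_spanI) (auto simp: smul_def delta_def supp_def split: if_splits)
    then show ?case using step.IH by (rule hbar_span_add)
  qed
qed

lemma hbar_span_subset_cspan_monomials:
  "hbar_span S e \<subseteq> cspan ((\<lambda>w. smul (hbar ^ e w) (delta w)) ` S)"
proof -
  have "f \<in> cspan ((\<lambda>w. smul (hbar ^ e w) (delta w)) ` S)"
    if "finite F" "supp f \<subseteq> F" "f \<in> hbar_span S e" for F f
    using that
  proof (induction F arbitrary: f rule: finite_induct)
    case empty
    then have "f = (\<lambda>_. 0)" by (auto simp: supp_def)
    then show ?case by (simp add: cspan.zero)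
  next
    case (insert w0 F)
    define g where "g = f(w0 := 0)"
    have "g \<in> hbar_span S e"
    proof (rule hbar_spanI)
      show "finite (supp g)"
        using hbar_spanD(1)[OF insert.prems(2)]
        by (rule finite_subset[rotated]) (auto simp: g_def supp_def)
    qed (use hbar_spanD(2,3)[OF insert.prems(2)] in \<open>auto simp: g_def split: if_splits\<close>)
    moreover have "supp g \<subseteq> F"
      using insert.prems(1) by (auto simp: g_def supp_def)
    ultimately have g: "g \<in> cspan ((\<lambda>w. smul (hbar ^ e w) (delta w)) ` S)"
      using insert.IH by blast
    show ?case
    proof (cases "f w0 = 0")
      case True
      then show ?thesis using g by (simp add: g_def fun_upd_idem)
    next
      case False
      then have "w0 \<in> S" by (rule hbar_spanD(2)[OF insert.prems(2)])
      obtain k where k: "f w0 = hbar ^ e w0 * k"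
        using hbar_spanD(3)[OF insert.prems(2)] by blast
      have "f = (\<lambda>w. k * smul (hbar ^ e w0) (delta w0) w + g w)"
        by (auto simp: fun_eq_iff g_def smul_def delta_def k)
      then show ?thesis using cspan.step[OF _ g] \<open>w0 \<in> S\<close> by auto
    qed
  qed
  then show ?thesis
    by (auto dest: hbar_spanD(1))
qed

lemma cspan_monomials_eq_hbar_span:
  "cspan ((\<lambda>w. smul (hbar ^ e w) (delta w)) ` S) = hbar_span S e"
  using cspan_monomials_subset_hbar_span hbar_span_subset_cspan_monomials by (rule subset_antisym)

lemma plus_hbar_times_mem_hbar_span:
  assumes "Q \<subseteq> S" and x: "x \<in> hbar_span Q e" and y: "y \<in> hbar_span S e"
  shows "(\<lambda>w. x w + hbar * y w) \<in> hbar_span S (\<lambda>w. e w + (if w \<in> Q then 0 else 1))"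
proof (rule hbar_spanI)
  have "supp (\<lambda>w. x w + hbar * y w) \<subseteq> supp x \<union> supp y"
    by (auto simp: supp_def)
  then show "finite (supp (\<lambda>w. x w + hbar * y w))"
    using x y by (meson finite_Un finite_subset hbar_spanD(1))
  show "w \<in> S" if "x w + hbar * y w \<noteq> 0" for w
    using that assms(1) hbar_spanD(2)[OF x, of w] hbar_spanD(2)[OF y, of w]
    by (cases "x w = 0") auto
  show "hbar ^ (e w + (if w \<in> Q then 0 else 1)) dvd x w + hbar * y w" for w
  proof (cases "w \<in> Q")
    case True
    then show ?thesis
      using hbar_spanD(3)[OF x, of w] hbar_spanD(3)[OF y, of w] by (simp add: dvd_add)
  next
    case False
    then have "x w = 0" using hbar_spanD(2)[OF x] by blast
    then show ?thesis
      using False hbar_spanD(3)[OF y, of w] by (simp add: mult_dvd_mono)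
  qed
qed

lemma hbar_span_plus_hbar_times_cases:
  assumes f: "f \<in> hbar_span S (\<lambda>w. e w + (if w \<in> Q then 0 else 1))"
  obtains x y where "x \<in> hbar_span Q e" and "y \<in> hbar_span S e" and "f = (\<lambda>w. x w + hbar * y w)"
proof
  define x where "x w = (if w \<in> Q then f w else 0)" for w
  define y where "y w = (if w \<in> Q then 0 else f w div hbar)" for w
  show "x \<in> hbar_span Q e"
  proof (rule hbar_spanI)
    show "finite (supp x)"
      using hbar_spanD(1)[OF f] by (rule finite_subset[rotated]) (auto simp: supp_def x_def)
    show "x w \<noteq> 0 \<Longrightarrow> w \<in> Q" for w by (simp add: x_def split: if_splits)
    show "hbar ^ e w dvd x w" for w
      using hbar_spanD(3)[OF f, of w] by (cases "w \<in> Q") (simp_all add: x_def)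
  qed
  show "y \<in> hbar_span S e"
  proof (rule hbar_spanI)
    show "finite (supp y)"
      using hbar_spanD(1)[OF f] by (rule finite_subset[rotated]) (auto simp: supp_def y_def)
    show "y w \<noteq> 0 \<Longrightarrow> w \<in> S" for w
      using hbar_spanD(2)[OF f, of w] by (cases "f w = 0") (auto simp: y_def split: if_splits)
    show "hbar ^ e w dvd y w" for w
    proof (cases "w \<in> Q")
      case False
      then obtain k where "f w = hbar ^ e w * hbar * k"
        using hbar_spanD(3)[OF f, of w] by (auto simp: mult_ac elim: dvdE)
      then show ?thesis using False by (simp add: y_def)
    qed (simp add: y_def)
  qed
  have "f w = x w + hbar * y w" for w
  proof (cases "w \<in> Q")
    case False
    then have "hbar dvd f w"
      using hbar_spanD(3)[OF f, of w] by (simp add: dvd_mult_left)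
    then show ?thesis using False by (simp add: x_def y_def)
  qed (simp add: x_def y_def)
  then show "f = (\<lambda>w. x w + hbar * y w)" by auto
qed

lemma hbar_span_plus_hbar_times:
  assumes "Q \<subseteq> S"
  shows "{(\<lambda>w. x w + hbar * y w) | x y. x \<in> hbar_span Q e \<and> y \<in> hbar_span S e}
       = hbar_span S (\<lambda>w. e w + (if w \<in> Q then 0 else 1))"
  using plus_hbar_times_mem_hbar_span[OF assms] hbar_span_plus_hbar_times_cases by blast

section \<open>Shuffles of words in \<open>a\<close> and \<open>b\<close>\<close>

lemma UNIV_ab: "UNIV = {La, Lb}"
  using ab.exhaust by auto

lemma ab_not_Lb_iff: "x \<noteq> Lb \<longleftrightarrow> x = La"
  by (cases x) auto

lemma rcons_Nil [simp]: "rcons x f [] = 0"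
  by (simp add: rcons_def)

lemma rcons_Cons [simp]: "rcons x f (y # w) = (if y = x then f w else 0)"
  by (simp add: rcons_def)

definition starts_b :: "word \<Rightarrow> bool" where
  "starts_b r \<longleftrightarrow> r \<noteq> [] \<and> hd r = Lb"

lemma starts_b_simps [simp]: "\<not> starts_b []" "starts_b (Lb # r)" "\<not> starts_b (La # r)"
  by (auto simp: starts_b_def)

fun bb_count :: "word \<Rightarrow> nat" where
  "bb_count [] = 0"
| "bb_count (La # r) = bb_count r"
| "bb_count (Lb # r) = bb_count r + (if starts_b r then 1 else 0)"

text \<open>On a reversed word: a factor \<open>a a\<close> followed later by a disjoint factor \<open>b b\<close>. In the word
  itself this is a letter \<open>hbar b\<close> somewhere before a letter \<open>g\<^sub>k\<close> with \<open>k \<ge> 2\<close>, the pattern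
  defining \<open>n\<^sub>0\<close>.\<close>
fun aa_before_bb :: "word \<Rightarrow> bool" where
  "aa_before_bb [] \<longleftrightarrow> False"
| "aa_before_bb (Lb # r) \<longleftrightarrow> aa_before_bb r"
| "aa_before_bb (La # r) \<longleftrightarrow> aa_before_bb r \<or> (\<exists>r'. r = La # r' \<and> 0 < bb_count r')"

definition n0_defect :: "word \<Rightarrow> nat" where
  "n0_defect r = (if aa_before_bb r then 0 else 1)"

lemma n0_defect_le_1: "n0_defect r \<le> 1"
  by (simp add: n0_defect_def)

lemma n0_defect_Lb [simp]: "n0_defect (Lb # r) = n0_defect r"
  by (simp add: n0_defect_def)

lemma n0_defect_La_le: "n0_defect (La # r) \<le> n0_defect r"
  by (simp add: n0_defect_def)

lemma n0_defect_La_lessD: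
  "n0_defect (La # r) < n0_defect r \<Longrightarrow> \<exists>r'. r = La # r' \<and> 0 < bb_count r'"
  by (auto simp: n0_defect_def split: if_splits)

definition shuffle_bb_bound :: "word \<Rightarrow> word \<Rightarrow> nat" where
  "shuffle_bb_bound u v = bb_count u + bb_count v + (if starts_b u \<and> starts_b v then 1 else 0)"

lemma sh_rev_Nil_nonzeroD: "sh_rev u v [] \<noteq> 0 \<Longrightarrow> u = [] \<and> v = []"
  by (cases "(u, v)" rule: sh_rev.cases) (auto simp: delta_def split: if_splits)

lemma sh_rev_Lb_nonzeroD:
  "sh_rev (Lb # u) (x # v) w \<noteq> 0 \<Longrightarrow> \<exists>w'. w = Lb # w' \<and> sh_rev u (x # v) w' \<noteq> 0"
  by (cases w) (auto split: if_splits)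

lemma sh_rev_La_Lb_nonzeroD:
  "sh_rev (La # u) (Lb # v) w \<noteq> 0 \<Longrightarrow> \<exists>w'. w = Lb # w' \<and> sh_rev (La # u) v w' \<noteq> 0"
  by (cases w) (auto split: if_splits)

lemma sh_rev_La_La_nonzeroD:
  assumes "sh_rev (La # u) (La # v) w \<noteq> 0"
  shows "\<exists>w'. w = La # w' \<and>
    (sh_rev (La # u) v w' \<noteq> 0 \<or> sh_rev u (La # v) w' \<noteq> 0 \<or> sh_rev u v w' \<noteq> 0)"
  using assms by (cases w) (auto split: if_splits)

lemma sh_rev_length: "sh_rev u v w \<noteq> 0 \<Longrightarrow> length w \<le> length u + length v"
proof (induction u v arbitrary: w rule: sh_rev.induct)
  case (3 u x v)
  then obtain w' where "w = Lb # w'" "sh_rev u (x # v) w' \<noteq> 0"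
    by (blast dest: sh_rev_Lb_nonzeroD)
  then show ?case using "3.IH"[of w'] by simp
next
  case (4 u v)
  then obtain w' where "w = Lb # w'" "sh_rev (La # u) v w' \<noteq> 0"
    by (blast dest: sh_rev_La_Lb_nonzeroD)
  then show ?case using "4.IH"[of w'] by simp
next
  case (5 u v)
  then obtain w' where "w = La # w'"
    and "sh_rev (La # u) v w' \<noteq> 0 \<or> sh_rev u (La # v) w' \<noteq> 0 \<or> sh_rev u v w' \<noteq> 0"
    by (blast dest: sh_rev_La_La_nonzeroD)
  then show ?case using "5.IH"[of w'] by auto
qed (auto simp: delta_def split: if_splits)

lemma sh_rev_starts_b: "sh_rev u v w \<noteq> 0 \<Longrightarrow> starts_b w \<longleftrightarrow> starts_b u \<or> starts_b v"
  by (cases "(u, v)" rule: sh_rev.cases; cases w) (auto simp: delta_def split: if_splits)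

lemma sh_rev_last_b:
  "sh_rev u v w \<noteq> 0 \<Longrightarrow> (u = [] \<or> last u = Lb) \<Longrightarrow> (v = [] \<or> last v = Lb)
    \<Longrightarrow> w = [] \<or> last w = Lb"
proof (induction u v arbitrary: w rule: sh_rev.induct)
  case (3 u x v)
  then obtain w' where "w = Lb # w'" "sh_rev u (x # v) w' \<noteq> 0"
    by (blast dest: sh_rev_Lb_nonzeroD)
  moreover have "u = [] \<or> last u = Lb"
    using "3.prems"(2) by (cases u) auto
  ultimately have "w' = [] \<or> last w' = Lb"
    using "3.IH" "3.prems"(3) by blast
  then show ?case using \<open>w = Lb # w'\<close> by auto
next
  case (4 u v)
  then obtain w' where "w = Lb # w'" "sh_rev (La # u) v w' \<noteq> 0"
    by (blast dest: sh_rev_La_Lb_nonzeroD)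
  moreover have "v = [] \<or> last v = Lb"
    using "4.prems"(3) by (cases v) auto
  ultimately have "w' = [] \<or> last w' = Lb"
    using "4.IH" "4.prems"(2) by blast
  then show ?case using \<open>w = Lb # w'\<close> by auto
next
  case (5 u v)
  then obtain w' where w: "w = La # w'"
    and nz: "sh_rev (La # u) v w' \<noteq> 0 \<or> sh_rev u (La # v) w' \<noteq> 0 \<or> sh_rev u v w' \<noteq> 0"
    by (blast dest: sh_rev_La_La_nonzeroD)
  have u: "u \<noteq> []" "last u = Lb" and v: "v \<noteq> []" "last v = Lb"
    using "5.prems"(2,3) by (auto split: if_splits)
  have "w' = [] \<or> last w' = Lb"
    using nz "5.IH"[of w'] u v by auto
  moreover have "w' \<noteq> []"
    using nz u v by (auto dest: sh_rev_Nil_nonzeroD)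
  ultimately show ?case by (simp add: w)
qed (auto simp: delta_def split: if_splits)

lemma bb_count_le_sh_rev: "sh_rev u v w \<noteq> 0 \<Longrightarrow> bb_count u \<le> bb_count w"
proof (induction u v arbitrary: w rule: sh_rev.induct)
  case (3 u x v)
  then obtain w' where w': "w = Lb # w'" "sh_rev u (x # v) w' \<noteq> 0"
    by (blast dest: sh_rev_Lb_nonzeroD)
  then have "starts_b u \<Longrightarrow> starts_b w'"
    using sh_rev_starts_b by blast
  then show ?case using "3.IH"[OF w'(2)] by (simp add: w'(1))
next
  case (4 u v)
  then obtain w' where "w = Lb # w'" "sh_rev (La # u) v w' \<noteq> 0"
    by (blast dest: sh_rev_La_Lb_nonzeroD)
  then show ?case using "4.IH"[of w'] by simp
next
  case (5 u v)
  then obtain w' where "w = La # w'"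
    and "sh_rev (La # u) v w' \<noteq> 0 \<or> sh_rev u (La # v) w' \<noteq> 0 \<or> sh_rev u v w' \<noteq> 0"
    by (blast dest: sh_rev_La_La_nonzeroD)
  then show ?case using "5.IH"[of w'] by auto
qed (auto simp: delta_def split: if_splits)

lemma shuffle_bb_bound_Lb:
  "sh_rev u (x # v) w \<noteq> 0 \<Longrightarrow>
    shuffle_bb_bound (Lb # u) (x # v) = shuffle_bb_bound u (x # v) + (if starts_b w then 1 else 0)"
  using sh_rev_starts_b by (fastforce simp: shuffle_bb_bound_def)

lemma shuffle_bb_bound_La_Lb:
  "sh_rev (La # u) v w \<noteq> 0 \<Longrightarrow>
    shuffle_bb_bound (La # u) (Lb # v) = shuffle_bb_bound (La # u) v + (if starts_b w then 1 else 0)"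
  using sh_rev_starts_b by (fastforce simp: shuffle_bb_bound_def)

text \<open>A factor \<open>b b\<close> of a shuffle that is not inherited from \<open>u\<close> or \<open>v\<close> consists of two
  letters \<open>b\<close> made adjacent: either the final letters of \<open>u\<close> and \<open>v\<close> (the extra \<open>1\<close> of
  \<^const>\<open>shuffle_bb_bound\<close>), or two letters followed by letters \<open>a\<close> that are contracted,
  which contributes a factor \<open>hbar\<close>.\<close>
lemma sh_rev_bb_dvd: "hbar ^ bb_count w dvd hbar ^ shuffle_bb_bound u v * sh_rev u v w"
proof (induction u v arbitrary: w rule: sh_rev.induct)
  case (3 u x v)
  show ?case
  proof (cases "sh_rev (Lb # u) (x # v) w = 0")
    case False
    then obtain w' where w: "w = Lb # w'" and nz: "sh_rev u (x # v) w' \<noteq> 0"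
      by (blast dest: sh_rev_Lb_nonzeroD)
    then show ?thesis
      using power_dvd_power_mult_shift[OF "3.IH"[of w']] by (simp add: shuffle_bb_bound_Lb)
  qed simp
next
  case (4 u v)
  show ?case
  proof (cases "sh_rev (La # u) (Lb # v) w = 0")
    case False
    then obtain w' where w: "w = Lb # w'" and nz: "sh_rev (La # u) v w' \<noteq> 0"
      by (blast dest: sh_rev_La_Lb_nonzeroD)
    then show ?thesis
      using power_dvd_power_mult_shift[OF "4.IH"[of w']] by (simp add: shuffle_bb_bound_La_Lb)
  qed simp
next
  case (5 u v)
  show ?case
  proof (cases w)
    case (Cons y w')
    define P where "P = bb_count u + bb_count v"
    have bound: "shuffle_bb_bound (La # u) (La # v) = P"
      by (simp add: shuffle_bb_bound_def P_def)
    have "hbar ^ bb_count w' dvd hbar ^ P * sh_rev (La # u) v w'"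
      and "hbar ^ bb_count w' dvd hbar ^ P * sh_rev u (La # v) w'"
      using "5.IH"(1,2)[of w'] by (simp_all add: shuffle_bb_bound_def P_def)
    moreover have "hbar ^ bb_count w' dvd hbar ^ P * (hbar * sh_rev u v w')"
      using power_dvd_power_mult_mono[OF "5.IH"(3)[of w'], of _ "P + 1"]
      by (simp add: shuffle_bb_bound_def P_def mult_ac)
    ultimately show ?thesis
      by (cases y) (simp_all add: Cons bound distrib_left dvd_add)
  qed simp
qed (auto simp: delta_def shuffle_bb_bound_def)

text \<open>If the pattern of \<open>La # u\<close> is lost in \<open>u = La # u'\<close>, then every word of \<open>u \<cdot> (La # v)\<close>
  starts with \<open>a\<close> and inherits the \<open>b b\<close> of \<open>u'\<close>, so prefixing \<open>a\<close> restores the pattern.\<close>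
lemma sh_rev_lost_pattern_dvd:
  assumes "n0_defect (La # u) < n0_defect u"
  shows "hbar ^ (bb_count w + n0_defect (La # w)) dvd
    hbar ^ (bb_count u + bb_count v) * sh_rev u (La # v) w"
proof (cases "sh_rev u (La # v) w = 0")
  case False
  obtain u' where u: "u = La # u'" and "0 < bb_count u'"
    using assms by (blast dest: n0_defect_La_lessD)
  then obtain w' where w: "w = La # w'"
    using False by (blast dest: sh_rev_La_La_nonzeroD)
  have "bb_count u \<le> bb_count w"
    using False by (rule bb_count_le_sh_rev)
  then have "n0_defect (La # w) = 0"
    using \<open>0 < bb_count u'\<close> by (simp add: n0_defect_def u w)
  then show ?thesis
    using sh_rev_bb_dvd[of w u "La # v"] by (simp add: shuffle_bb_bound_def u)
qed simp

lemma sh_rev_n0_dvd: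
  "hbar ^ (bb_count w + n0_defect w) dvd hbar ^ (shuffle_bb_bound u v + n0_defect u) * sh_rev u v w"
proof (induction u v arbitrary: w rule: sh_rev.induct)
  case (1 v)
  then show ?case
    using n0_defect_le_1[of v]
    by (auto simp: delta_def shuffle_bb_bound_def n0_defect_def le_imp_power_dvd)
next
  case (3 u x v)
  show ?case
  proof (cases "sh_rev (Lb # u) (x # v) w = 0")
    case False
    then obtain w' where w: "w = Lb # w'" and nz: "sh_rev u (x # v) w' \<noteq> 0"
      by (blast dest: sh_rev_Lb_nonzeroD)
    then show ?thesis
      using power_dvd_power_mult_shift[OF "3.IH"[of w'], of "if starts_b w' then 1 else 0"]
      by (simp add: shuffle_bb_bound_Lb ac_simps)
  qed simp
next
  case (4 u v)
  show ?case
  proof (cases "sh_rev (La # u) (Lb # v) w = 0")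
    case False
    then obtain w' where w: "w = Lb # w'" and nz: "sh_rev (La # u) v w' \<noteq> 0"
      by (blast dest: sh_rev_La_Lb_nonzeroD)
    then show ?thesis
      using power_dvd_power_mult_shift[OF "4.IH"[of w'], of "if starts_b w' then 1 else 0"]
      by (simp add: shuffle_bb_bound_La_Lb ac_simps)
  qed simp
next
  case (5 u v)
  show ?case
  proof (cases w)
    case (Cons y w')
    define P where "P = bb_count u + bb_count v + n0_defect (La # u)"
    have bound: "shuffle_bb_bound (La # u) (La # v) + n0_defect (La # u) = P"
      by (simp add: shuffle_bb_bound_def P_def)
    have lhs: "bb_count w' + n0_defect (La # w') \<le> bb_count w' + n0_defect w'"
      using n0_defect_La_le by simp
    have t1: "hbar ^ (bb_count w' + n0_defect (La # w')) dvd hbar ^ P * sh_rev (La # u) v w'"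
      using "5.IH"(1)[of w'] lhs
      by (rule power_dvd_power_mult_mono) (simp add: shuffle_bb_bound_def P_def)
    have t2: "hbar ^ (bb_count w' + n0_defect (La # w')) dvd hbar ^ P * sh_rev u (La # v) w'"
    proof (cases "n0_defect (La # u) < n0_defect u")
      case True
      then have "n0_defect (La # u) = 0"
        using n0_defect_le_1[of u] by simp
      then show ?thesis
        using sh_rev_lost_pattern_dvd[OF True] by (simp add: P_def)
    next
      case False
      then have "shuffle_bb_bound u (La # v) + n0_defect u \<le> P"
        by (simp add: shuffle_bb_bound_def P_def)
      then show ?thesis
        using power_dvd_power_mult_mono[OF "5.IH"(2)[of w'] lhs] by blast
    qed
    have "shuffle_bb_bound u v + n0_defect u \<le> P + 1"
    proof (cases "n0_defect (La # u) < n0_defect u")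
      case True
      then show ?thesis
        using n0_defect_le_1[of u] by (auto simp: shuffle_bb_bound_def P_def dest: n0_defect_La_lessD)
    qed (simp add: shuffle_bb_bound_def P_def)
    then have t3: "hbar ^ (bb_count w' + n0_defect (La # w')) dvd hbar ^ P * (hbar * sh_rev u v w')"
      using power_dvd_power_mult_mono[OF "5.IH"(3)[of w'] lhs, of "P + 1"] by (simp add: ac_simps)
    show ?thesis
      using t1 t2 t3 by (cases y) (simp_all add: Cons bound distrib_left dvd_add)
  qed simp
qed (auto simp: delta_def shuffle_bb_bound_def)

section \<open>Quasi-shuffles of words in \<open>A\<close>\<close>

fun zero_before_ge2 :: "nat list \<Rightarrow> bool" where
  "zero_before_ge2 [] \<longleftrightarrow> False"
| "zero_before_ge2 (x # W) \<longleftrightarrow> zero_before_ge2 W \<or> (x = 0 \<and> (\<exists>y\<in>set W. 2 \<le> y))"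

lemma zero_before_ge2_snoc:
  "zero_before_ge2 (W @ [x]) \<longleftrightarrow> zero_before_ge2 W \<or> (2 \<le> x \<and> 0 \<in> set W)"
  by (induction W) auto

definition zero_ge2_defect :: "nat list \<Rightarrow> nat" where
  "zero_ge2_defect W = (if zero_before_ge2 W then 0 else 1)"

lemma har_rev_Cons_Cons_nonzeroD:
  assumes "har_rev (x # u) (y # v) w \<noteq> 0"
  shows "\<exists>w'. (w = x # w' \<and> har_rev u (y # v) w' \<noteq> 0) \<or> (w = y # w' \<and> har_rev (x # u) v w' \<noteq> 0)
    \<or> (w = (x + y) # w' \<and> har_rev u v w' \<noteq> 0)"
  using assms by (cases w) (auto split: if_splits)

lemma har_rev_hd_pos:
  "har_rev u v w \<noteq> 0 \<Longrightarrow> (u = [] \<or> 1 \<le> hd u) \<Longrightarrow> (v = [] \<or> 1 \<le> hd v)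
    \<Longrightarrow> w = [] \<or> 1 \<le> hd w"
  by (cases "(u, v)" rule: har_rev.cases; cases w) (auto simp: delta_def split: if_splits)

lemma har_rev_bounded:
  "har_rev u v w \<noteq> 0 \<Longrightarrow>
    length w \<le> length u + length v \<and> (\<forall>z\<in>set w. z \<le> sum_list u + sum_list v)"
proof (induction u v arbitrary: w rule: har_rev.induct)
  case (3 x u y v)
  then obtain w' where "(w = x # w' \<and> har_rev u (y # v) w' \<noteq> 0) \<or> (w = y # w' \<and> har_rev (x # u) v w' \<noteq> 0)
    \<or> (w = (x + y) # w' \<and> har_rev u v w' \<noteq> 0)"
    by (blast dest: har_rev_Cons_Cons_nonzeroD)
  then show ?case using "3.IH"[of w'] by fastforce
qed (auto simp: delta_def split: if_splits intro: member_le_sum_list trans_le_add2)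

lemma har_rev_Cons_Cons:
  "har_rev (x # u) (y # v) (z # w) =
    (if z = x then har_rev u (y # v) w else 0) + (if z = y then har_rev (x # u) v w else 0)
    + circ_coeff x y * (if z = x + y then har_rev u v w else 0)"
  by simp

text \<open>A letter \<open>0\<close> (that is, \<open>hbar b\<close>) of \<open>u\<close> disappears only in a contraction, whose
  coefficient \<^const>\<open>circ_coeff\<close> is then \<open>hbar\<close>.\<close>
lemma har_rev_zero_dvd: "0 \<in> set u \<Longrightarrow> 0 \<notin> set w \<Longrightarrow> hbar dvd har_rev u v w"
proof (induction u v arbitrary: w rule: har_rev.induct)
  case (3 x u y v)
  show ?case
  proof (cases w)
    case (Cons z w')
    then show ?thesis
      using "3.IH"[of w'] "3.prems" unfolding har_rev_Cons_Cons
      by (auto simp: circ_coeff_def intro!: dvd_add)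
  qed simp
qed (auto simp: delta_def)

lemma har_rev_pattern_dvd:
  "zero_before_ge2 (rev u) \<Longrightarrow> \<not> zero_before_ge2 (rev w) \<Longrightarrow> hbar dvd har_rev u v w"
proof (induction u v arbitrary: w rule: har_rev.induct)
  case (3 x u y v)
  show ?case
  proof (cases w)
    case (Cons z w')
    show ?thesis
      using "3.IH"[of w'] "3.prems" unfolding Cons har_rev_Cons_Cons
      by (cases "zero_before_ge2 (rev u)")
        (auto simp: zero_before_ge2_snoc intro!: dvd_add dvd_mult har_rev_zero_dvd)
  qed simp
qed (auto simp: delta_def)

section \<open>From words in \<open>A\<close> to words in \<open>a\<close> and \<open>b\<close>\<close>

definition zero_count :: "nat list \<Rightarrow> nat" where
  "zero_count W = length (filter (\<lambda>k. k = 0) W)"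

lemma zero_count_simps [simp]:
  "zero_count [] = 0" "zero_count (W @ [k]) = zero_count W + (if k = 0 then 1 else 0)"
  by (simp_all add: zero_count_def)

lemma flat_simps [simp]:
  "flat [] = []" "flat (k # W) = Lb # replicate k La @ flat W"
  "flat (W @ [k]) = flat W @ Lb # replicate k La"
  by (simp_all add: flat_def)

lemma replicate_La_append_eqD:
  "replicate k La @ xs = replicate k' La @ ys \<Longrightarrow> (xs = [] \<or> hd xs = Lb) \<Longrightarrow> (ys = [] \<or> hd ys = Lb)
    \<Longrightarrow> k = k' \<and> xs = ys"
proof (induction k arbitrary: k')
  case 0
  then show ?case by (cases k') auto
next
  case (Suc k)
  then show ?case by (cases k') auto
qed

lemma inj_flat: "inj flat"
proof (rule injI)
  show "flat U = flat V \<Longrightarrow> U = V" for U V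
  proof (induction U arbitrary: V)
    case Nil
    then show ?case by (cases V) auto
  next
    case (Cons k U)
    then obtain k' V' where V: "V = k' # V'" by (cases V) auto
    have "flat W = [] \<or> hd (flat W) = Lb" for W by (cases W) auto
    then have "k = k' \<and> flat U = flat V'"
      using Cons.prems by (intro replicate_La_append_eqD) (auto simp: V)
    then show ?case using Cons.IH V by auto
  qed
qed

lemma flat_eq_iff [simp]: "flat U = flat V \<longleftrightarrow> U = V"
  using inj_flat by (auto dest: injD)

lemma starts_b_replicate_La [simp]: "starts_b (replicate k La @ Lb # r) \<longleftrightarrow> k = 0"
  by (cases k) auto

lemma bb_count_replicate_La [simp]: "bb_count (replicate k La @ r) = bb_count r"
  by (induction k) auto

lemma aa_before_bb_replicate_La:
  "aa_before_bb (replicate k La @ Lb # r) \<longleftrightarrow> aa_before_bb r \<or> (2 \<le> k \<and> 0 < bb_count (Lb # r))"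
proof (induction k)
  case (Suc k)
  then show ?case by (cases k) (auto simp del: bb_count.simps(3))
qed simp

lemma starts_b_rev_flat: "starts_b (rev (flat W)) \<longleftrightarrow> W \<noteq> [] \<and> last W = 0"
  by (cases W rule: rev_cases) auto

lemma bb_count_Lb_rev_flat: "bb_count (Lb # rev (flat W)) = zero_count W"
  by (induction W rule: rev_induct) (auto simp: starts_b_rev_flat)

lemma aa_before_bb_rev_flat: "aa_before_bb (rev (flat W)) \<longleftrightarrow> zero_before_ge2 W"
proof (induction W rule: rev_induct)
  case (snoc k W)
  have "0 < zero_count W \<longleftrightarrow> 0 \<in> set W"
    by (simp add: zero_count_def filter_empty_conv)
  then show ?case
    using snoc by (simp add: aa_before_bb_replicate_La bb_count_Lb_rev_flat zero_before_ge2_snoc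
        del: bb_count.simps(3))
qed simp

definition H0_Awords :: "nat list set" where
  "H0_Awords = {W. W = [] \<or> 1 \<le> last W}"

definition H0_words :: "word set" where
  "H0_words = {w. w = [] \<or> hd w = Lb \<and> last w = La}"

lemma bb_count_rev_flat: "W \<in> H0_Awords \<Longrightarrow> bb_count (rev (flat W)) = zero_count W"
  by (cases W rule: rev_cases) (auto simp: H0_Awords_def bb_count_Lb_rev_flat[symmetric])

lemma ex_flat: "w = [] \<or> hd w = Lb \<Longrightarrow> \<exists>W. w = flat W"
proof (induction w rule: rev_induct)
  case (snoc x w)
  then have w: "w = [] \<or> hd w = Lb" by (cases w) auto
  then obtain W where W: "w = flat W" using snoc.IH by blast
  show ?case
  proof (cases x)
    case La
    then have "W \<noteq> []" using snoc.prems W by auto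
    then obtain W' k where "W = W' @ [k]" by (cases W rule: rev_cases) auto
    then show ?thesis
      using W La by (intro exI[of _ "W' @ [Suc k]"]) (simp add: replicate_append_same)
  next
    case Lb
    then show ?thesis using W by (intro exI[of _ "W @ [0]"]) simp
  qed
qed (rule exI[of _ "[]"], simp)

lemma flat_H0_Awords: "flat ` H0_Awords = H0_words"
proof
  show "flat ` H0_Awords \<subseteq> H0_words"
  proof clarify
    fix W assume "W \<in> H0_Awords"
    then show "flat W \<in> H0_words"
    proof (cases W rule: rev_cases)
      case (snoc W' k)
      have "hd (flat W) = Lb" by (cases W) (auto simp: snoc)
      then show ?thesis using \<open>W \<in> H0_Awords\<close> by (cases k) (auto simp: H0_words_def H0_Awords_def snoc)
    qed (simp add: H0_words_def)
  qed
  show "H0_words \<subseteq> flat ` H0_Awords"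
  proof
    fix w assume w: "w \<in> H0_words"
    then obtain W where W: "w = flat W" using ex_flat by (auto simp: H0_words_def)
    have "W \<in> H0_Awords"
    proof (cases W rule: rev_cases)
      case (snoc W' k)
      then show ?thesis using w W by (cases k) (auto simp: H0_Awords_def H0_words_def)
    qed (simp add: H0_Awords_def)
    then show "w \<in> flat ` H0_Awords" using W by blast
  qed
qed

lemma ex_le_nth_Cons_iff:
  "(\<exists>s t. s \<le> t \<and> t < length (x # xs) \<and> P ((x # xs) ! s) \<and> Q ((x # xs) ! t)) \<longleftrightarrow>
    (\<exists>s t. s \<le> t \<and> t < length xs \<and> P (xs ! s) \<and> Q (xs ! t)) \<or> (P x \<and> (\<exists>y\<in>set (x # xs). Q y))"
  (is "?L \<longleftrightarrow> ?R")
proof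
  assume ?L
  then obtain s t where st: "s \<le> t" "t < length (x # xs)" "P ((x # xs) ! s)" "Q ((x # xs) ! t)"
    by blast
  show ?R
  proof (cases s)
    case 0
    then show ?thesis using st nth_mem[OF st(2)] by auto
  next
    case (Suc s')
    then obtain t' where "t = Suc t'" using st(1) by (cases t) auto
    then show ?thesis using st Suc by auto
  qed
next
  assume ?R
  then consider s t where "s \<le> t" "t < length xs" "P (xs ! s)" "Q (xs ! t)"
    | y where "P x" "y \<in> set (x # xs)" "Q y"
    by blast
  then show ?L
  proof cases
    case (1 s t)
    then show ?L by (intro exI[of _ "Suc s"] exI[of _ "Suc t"]) auto
  next
    case (2 y)
    then obtain t where "t < length (x # xs)" "(x # xs) ! t = y" by (meson in_set_conv_nth)
    then show ?L using 2 by (intro exI[of _ 0] exI[of _ t]) auto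
  qed
qed

definition block :: "nat \<times> nat \<Rightarrow> nat list" where
  "block p = replicate (fst p) 0 @ [snd p + 1]"

lemma block_simps [simp]: "block (0, b) = [Suc b]" "block (Suc a, b) = 0 # block (a, b)"
  by (simp_all add: block_def)

lemma zero_before_ge2_concat_blocks:
  "zero_before_ge2 (concat (map block ps)) \<longleftrightarrow>
    (\<exists>s t. s \<le> t \<and> t < length ps \<and> 1 \<le> fst (ps ! s) \<and> 1 \<le> snd (ps ! t))"
proof (induction ps)
  case (Cons p ps)
  have "zero_before_ge2 (replicate k 0 @ W) \<longleftrightarrow> zero_before_ge2 W \<or> (1 \<le> k \<and> (\<exists>y\<in>set W. 2 \<le> y))"
    for k W by (induction k) auto
  then have "zero_before_ge2 (block p @ W) \<longleftrightarrow>
      zero_before_ge2 W \<or> (1 \<le> fst p \<and> (1 \<le> snd p \<or> (\<exists>y\<in>set W. 2 \<le> y)))" for W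
    by (auto simp: block_def)
  moreover have "(\<exists>y\<in>set (concat (map block ps)). 2 \<le> y) \<longleftrightarrow> (\<exists>q\<in>set ps. 1 \<le> snd q)"
    by (auto simp: block_def)
  ultimately have "zero_before_ge2 (concat (map block (p # ps))) \<longleftrightarrow>
      zero_before_ge2 (concat (map block ps)) \<or> (1 \<le> fst p \<and> (\<exists>q\<in>set (p # ps). 1 \<le> snd q))"
    by auto
  then show ?case
    using ex_le_nth_Cons_iff[where P = "\<lambda>q. 1 \<le> fst q" and Q = "\<lambda>q. 1 \<le> snd q" and x = p and xs = ps]
      Cons.IH by simp
qed simp

lemma ex_concat_blocks:
  "W \<noteq> [] \<Longrightarrow> 1 \<le> last W \<Longrightarrow> \<exists>ps. ps \<noteq> [] \<and> W = concat (map block ps)"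
proof (induction W)
  case (Cons x W)
  show ?case
  proof (cases "W = []")
    case True
    then show ?thesis
      using Cons.prems by (intro exI[of _ "[(0, x - 1)]"]) simp
  next
    case False
    then obtain a b ps where ps: "W = concat (map block ((a, b) # ps))"
      using Cons by (metis last_ConsR neq_Nil_conv surj_pair)
    show ?thesis
    proof (cases x)
      case 0
      then show ?thesis using ps by (intro exI[of _ "(Suc a, b) # ps"]) simp
    next
      case (Suc k)
      then show ?thesis using ps by (intro exI[of _ "(0, k) # (a, b) # ps"]) simp
    qed
  qed
qed simp

lemma n0_word_iff: "n0_word W \<longleftrightarrow> W \<noteq> [] \<and> 1 \<le> last W \<and> zero_before_ge2 W"
proof -
  have block_eq: "(\<lambda>(al, be). replicate al 0 @ [be + 1]) = block"
    by (auto simp: block_def)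
  have "W \<noteq> [] \<and> 1 \<le> last W" if "ps \<noteq> []" "W = concat (map block ps)" for ps
  proof -
    obtain ps' p where "ps = ps' @ [p]" using \<open>ps \<noteq> []\<close> by (cases ps rule: rev_cases) auto
    then show ?thesis using that by (simp add: block_def)
  qed
  then show ?thesis
    unfolding n0_word_def block_eq
    by (metis ex_concat_blocks zero_before_ge2_concat_blocks)
qed

lemma n0_word_iff_zero_before_ge2: "W \<in> H0_Awords \<Longrightarrow> n0_word W \<longleftrightarrow> zero_before_ge2 W"
  by (auto simp: n0_word_iff H0_Awords_def)

lemma n0_word_H0_Awords: "n0_word W \<Longrightarrow> W \<in> H0_Awords"
  by (simp add: n0_word_iff H0_Awords_def)

section \<open>The modules as spans of scaled words\<close>

definition H0hat_weight :: "word \<Rightarrow> nat" where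
  "H0hat_weight w = bb_count (rev w)"

definition nset_weight :: "word \<Rightarrow> nat" where
  "nset_weight w = bb_count (rev w) + n0_defect (rev w)"

lemma cspan_aw_eq_hbar_span:
  assumes "S \<subseteq> H0_Awords"
  shows "cspan (aw ` S) = hbar_span (flat ` S) H0hat_weight"
proof -
  have "aw W = smul (hbar ^ H0hat_weight (flat W)) (delta (flat W))" if "W \<in> S" for W
    using that assms by (auto simp: aw_def H0hat_weight_def bb_count_rev_flat zero_count_def)
  then have "aw ` S = (\<lambda>w. smul (hbar ^ H0hat_weight w) (delta w)) ` flat ` S"
    by (simp add: image_image cong: image_cong)
  then show ?thesis by (simp add: cspan_monomials_eq_hbar_span)
qed

lemma H0hat_eq_hbar_span: "H0hat = hbar_span H0_words H0hat_weight"
proof -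
  have "{W. W = [] \<or> W \<noteq> [] \<and> 1 \<le> last W} = H0_Awords"
    by (auto simp: H0_Awords_def)
  then show ?thesis
    by (simp add: H0hat_def cspan_aw_eq_hbar_span flat_H0_Awords)
qed

lemma nset_eq_hbar_span: "nset = hbar_span H0_words nset_weight"
proof -
  let ?N = "flat ` {W. n0_word W}"
  have "{W. n0_word W} \<subseteq> H0_Awords"
    using n0_word_H0_Awords by blast
  then have sub: "?N \<subseteq> H0_words" and n0: "n0 = hbar_span ?N H0hat_weight"
    by (auto simp: n0_def cspan_aw_eq_hbar_span flat_H0_Awords[symmetric])
  have "nset = hbar_span H0_words (\<lambda>w. H0hat_weight w + (if w \<in> ?N then 0 else 1))"
    unfolding nset_def n0 H0hat_eq_hbar_span by (rule hbar_span_plus_hbar_times[OF sub])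
  also have "\<dots> = hbar_span H0_words nset_weight"
  proof (rule hbar_span_cong)
    fix w assume "w \<in> H0_words"
    then obtain W where "W \<in> H0_Awords" "w = flat W"
      by (auto simp: flat_H0_Awords[symmetric])
    then show "H0hat_weight w + (if w \<in> ?N then 0 else 1) = nset_weight w"
      by (auto simp: H0hat_weight_def nset_weight_def n0_defect_def aa_before_bb_rev_flat
          n0_word_iff_zero_before_ge2)
  qed
  finally show ?thesis .
qed

lemma iota_flat: "finite (supp X) \<Longrightarrow> iota X (flat U) = X U * hbar ^ zero_count U"
proof -
  assume "finite (supp X)"
  then have "iota X (flat U) = (\<Sum>V\<in>supp X. if V = U then X V * hbar ^ zero_count V else 0)"
    unfolding iota_def by (intro sum.cong) (auto simp: aw_def smul_def delta_def zero_count_def)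
  also have "\<dots> = X U * hbar ^ zero_count U"
    using \<open>finite (supp X)\<close> by (simp add: supp_def)
  finally show ?thesis .
qed

lemma iota_not_flat: "w \<notin> range flat \<Longrightarrow> iota X w = 0"
  unfolding iota_def aw_def smul_def delta_def by (intro sum.neutral) auto

lemma iota_mem_hbar_span_iff:
  assumes X: "finite (supp X)" and e: "\<And>W. W \<in> S \<Longrightarrow> e (flat W) = zero_count W + d W"
  shows "iota X \<in> hbar_span (flat ` S) e \<longleftrightarrow> X \<in> hbar_span S d"
proof -
  have supp: "supp (iota X) = flat ` supp X"
  proof
    show "supp (iota X) \<subseteq> flat ` supp X"
      using iota_not_flat by (fastforce simp: supp_def iota_flat[OF X])
  qed (auto simp: supp_def iota_flat[OF X])
  have dvd: "hbar ^ e (flat W) dvd iota X (flat W) \<longleftrightarrow> hbar ^ d W dvd X W" if "W \<in> S" for W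
    using that by (simp add: iota_flat[OF X] e power_add mult.commute)
  show ?thesis
  proof
    assume L: "iota X \<in> hbar_span (flat ` S) e"
    show "X \<in> hbar_span S d"
    proof (rule hbar_spanI)
      show S: "X W \<noteq> 0 \<Longrightarrow> W \<in> S" for W
        using hbar_spanD(2)[OF L, of "flat W"] by (auto simp: iota_flat[OF X])
      show "hbar ^ d W dvd X W" for W
        using S[of W] dvd[of W] hbar_spanD(3)[OF L, of "flat W"] by (cases "X W = 0") auto
    qed (rule X)
  next
    assume R: "X \<in> hbar_span S d"
    show "iota X \<in> hbar_span (flat ` S) e"
    proof (rule hbar_spanI)
      show "finite (supp (iota X))"
        using X by (simp add: supp)
      show S: "iota X w \<noteq> 0 \<Longrightarrow> w \<in> flat ` S" for w
        using supp hbar_spanD(2)[OF R] by (auto simp: supp_def)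
      show "hbar ^ e w dvd iota X w" for w
      proof (cases "w \<in> flat ` S")
        case True
        then show ?thesis using dvd hbar_spanD(3)[OF R] by auto
      qed (use S[of w] in fastforce)
    qed
  qed
qed

lemma iota_mem_nset_iff:
  "finite (supp X) \<Longrightarrow> iota X \<in> nset \<longleftrightarrow> X \<in> hbar_span H0_Awords zero_ge2_defect"
  unfolding nset_eq_hbar_span flat_H0_Awords[symmetric]
  by (rule iota_mem_hbar_span_iff)
    (simp_all add: nset_weight_def n0_defect_def zero_ge2_defect_def bb_count_rev_flat aa_before_bb_rev_flat)

lemma iota_mem_H0hat_iff:
  "finite (supp X) \<Longrightarrow> iota X \<in> H0hat \<longleftrightarrow> X \<in> hbar_span H0_Awords (\<lambda>_. 0)"
  unfolding H0hat_eq_hbar_span flat_H0_Awords[symmetric]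
  by (rule iota_mem_hbar_span_iff) (simp_all add: H0hat_weight_def bb_count_rev_flat)

section \<open>Closure under the two products\<close>

lemma harm_term_mem_hbar_span:
  assumes U: "U \<in> H0_Awords" and V: "V \<in> H0_Awords" and c: "hbar ^ zero_ge2_defect U dvd c"
  shows "(\<lambda>R. c * d * har_word U V R) \<in> hbar_span H0_Awords zero_ge2_defect"
proof (rule hbar_spanI)
  let ?B = "{R. set R \<subseteq> {..sum_list U + sum_list V} \<and> length R \<le> length U + length V}"
  have "supp (\<lambda>R. c * d * har_word U V R) \<subseteq> ?B"
    using har_rev_bounded by (fastforce simp: supp_def har_word_def sum_list_rev)
  then show "finite (supp (\<lambda>R. c * d * har_word U V R))"
    by (rule finite_subset) (rule finite_lists_length_le, simp)
  have last_pos: "W \<in> H0_Awords \<longleftrightarrow> rev W = [] \<or> 1 \<le> hd (rev W)" for W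
    by (auto simp: H0_Awords_def hd_rev)
  show "R \<in> H0_Awords" if "c * d * har_word U V R \<noteq> 0" for R
    using that har_rev_hd_pos[of "rev U" "rev V" "rev R"] U V by (auto simp: har_word_def last_pos)
  show "hbar ^ zero_ge2_defect R dvd c * d * har_word U V R" for R
  proof (cases "zero_before_ge2 R")
    case False
    have "hbar dvd c * d * har_word U V R"
    proof (cases "zero_before_ge2 U")
      case True
      then have "hbar dvd har_word U V R"
        using False har_rev_pattern_dvd[of "rev U" "rev R" "rev V"] by (simp add: har_word_def)
      then show ?thesis by simp
    next
      case False
      then show ?thesis using c by (simp add: zero_ge2_defect_def)
    qed
    then show ?thesis using False by (simp add: zero_ge2_defect_def)
  qed (simp add: zero_ge2_defect_def)
qed

lemma harm_mem_hbar_span: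
  assumes "X \<in> hbar_span H0_Awords zero_ge2_defect" and "Y \<in> hbar_span H0_Awords (\<lambda>_. 0)"
  shows "harm X Y \<in> hbar_span H0_Awords zero_ge2_defect"
  unfolding harm_def
  using assms by (intro bilinear_mem_hbar_span harm_term_mem_hbar_span) (auto dest: hbar_spanD)

lemma shuffle_term_mem_hbar_span:
  assumes u: "u \<in> H0_words" and v: "v \<in> H0_words"
    and c: "hbar ^ nset_weight u dvd c" and d: "hbar ^ H0hat_weight v dvd d"
  shows "(\<lambda>w. c * d * sh_word u v w) \<in> hbar_span H0_words nset_weight"
proof (rule hbar_spanI)
  have "supp (\<lambda>w. c * d * sh_word u v w) \<subseteq> {w. set w \<subseteq> UNIV \<and> length w \<le> length u + length v}"
    using sh_rev_length by (fastforce simp: supp_def sh_word_def)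
  then show "finite (supp (\<lambda>w. c * d * sh_word u v w))"
    by (rule finite_subset) (rule finite_lists_length_le, simp add: UNIV_ab)
  have H0: "w \<in> H0_words \<longleftrightarrow> (rev w = [] \<or> last (rev w) = Lb) \<and> \<not> starts_b (rev w)" for w
    by (cases w) (auto simp: H0_words_def starts_b_def last_rev hd_rev ab_not_Lb_iff)
  show "w \<in> H0_words" if "c * d * sh_word u v w \<noteq> 0" for w
  proof -
    have nz: "sh_rev (rev u) (rev v) (rev w) \<noteq> 0"
      using that by (simp add: sh_word_def)
    then show ?thesis
      using u v sh_rev_last_b[OF nz] sh_rev_starts_b[OF nz] by (simp add: H0)
  qed
  show "hbar ^ nset_weight w dvd c * d * sh_word u v w" for w
  proof -
    have "shuffle_bb_bound (rev u) (rev v) = H0hat_weight u + H0hat_weight v"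
      using u v by (simp add: H0 shuffle_bb_bound_def H0hat_weight_def)
    then have "hbar ^ nset_weight w dvd hbar ^ (nset_weight u + H0hat_weight v) * sh_word u v w"
      using sh_rev_n0_dvd[of "rev w" "rev u" "rev v"]
      by (simp add: sh_word_def nset_weight_def H0hat_weight_def ac_simps)
    moreover have "hbar ^ (nset_weight u + H0hat_weight v) * sh_word u v w dvd c * d * sh_word u v w"
      using c d by (simp add: power_add mult_dvd_mono)
    ultimately show ?thesis by (rule dvd_trans)
  qed
qed

lemma shuffle_mem_hbar_span:
  assumes "x \<in> hbar_span H0_words nset_weight" and "y \<in> hbar_span H0_words H0hat_weight"
  shows "shuffle x y \<in> hbar_span H0_words nset_weight"
  unfolding shuffle_def
  using assms by (intro bilinear_mem_hbar_span shuffle_term_mem_hbar_span) (auto dest: hbar_spanD)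

theorem proposition3p7:
  shows "(\<forall>X Y. finite (supp X) \<longrightarrow> finite (supp Y) \<longrightarrow>
            iota X \<in> nset \<longrightarrow> iota Y \<in> H0hat \<longrightarrow> iota (harm X Y) \<in> nset)
       \<and> (\<forall>x \<in> nset. \<forall>y \<in> H0hat. shuffle x y \<in> nset)"
proof (intro conjI allI impI ballI)
  fix X Y :: "nat list lin"
  assume "finite (supp X)" "finite (supp Y)" "iota X \<in> nset" "iota Y \<in> H0hat"
  then have "harm X Y \<in> hbar_span H0_Awords zero_ge2_defect"
    by (intro harm_mem_hbar_span) (simp_all add: iota_mem_nset_iff iota_mem_H0hat_iff)
  then show "iota (harm X Y) \<in> nset"
    by (simp add: iota_mem_nset_iff hbar_spanD(1))
next
  fix x y assume "x \<in> nset" "y \<in> H0hat"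
  then show "shuffle x y \<in> nset"
    unfolding nset_eq_hbar_span H0hat_eq_hbar_span by (rule shuffle_mem_hbar_span)
qed

end
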